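(* Let $f,g\in\mathbb{R}[X]$, not both zero, and $\gamma\in\Gamma$ be such that $f/\gamma$ and $g/\gamma$ lie in $D$. Let $M=\gcd(f,g)$ and write $f=Mf'$, $g=Mg'$. Then the ideal $(f/\gamma,\,g/\gamma)$ of $D$ is not principal if and only if $s=\max\{\deg f',\deg g'\}$ is odd.
   Context: $D$ denotes the minimal Dress ring of the field $\mathbb{R}(X)$, i.e. the subring of $\mathbb{R}(X)$ generated by $\mathbb{Z}$ and all elements $1/(1+h^2)$ with $h\in\mathbb{R}(X)$. $\Gamma$ denotes the set of polynomials in $\mathbb{R}[X]$ having no real root (nonzero constants included). *)

theory Defs
  imports "HOL-Computational_Algebra.Computational_Algebra" "HOL-Computational_Algebra.Field_as_Ring"
begin

type_synonym ratfun = "real poly fract"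

inductive_set dress_ring :: "ratfun set" where
  int:  "of_int n \<in> dress_ring"
| gen:  "1 / (1 + h\<^sup>2) \<in> dress_ring"
| add:  "a \<in> dress_ring \<Longrightarrow> b \<in> dress_ring \<Longrightarrow> a + b \<in> dress_ring"
| neg:  "a \<in> dress_ring \<Longrightarrow> - a \<in> dress_ring"
| mult: "a \<in> dress_ring \<Longrightarrow> b \<in> dress_ring \<Longrightarrow> a * b \<in> dress_ring"

text \<open>Gamma: real polynomials without real root (this excludes the zero polynomial,
  includes nonzero constants).\<close>
definition Gamma :: "real poly set" where
  "Gamma = {p. \<forall>x::real. poly p x \<noteq> 0}"

definition dress_ideal2 :: "ratfun \<Rightarrow> ratfun \<Rightarrow> ratfun set" where
  "dress_ideal2 u v = {a * u + b * v | a b. a \<in> dress_ring \<and> b \<in> dress_ring}"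

definition dress_principal :: "ratfun set \<Rightarrow> bool" where
  "dress_principal I \<longleftrightarrow> (\<exists>c\<in>dress_ring. I = {a * c | a. a \<in> dress_ring})"

end

theory Submission
  imports Defs
begin

text \<open>
  The Dress ring D consists exactly of the fractions P/E with E without real roots and
  deg P \<le> deg E: the generators 1/(1 + h^2) are of this form (write h = p/q in lowest terms),
  and conversely such a fraction is reduced, by splitting off an irreducible quadratic factor
  (X - a)^2 + b^2 of E, to fractions with a quadratic denominator, which are obtained from the
  generators for h = (X - a)/b and h = (b - X + a)/(b + X - a).

  Write u = m F and v = m G with m = M/\<gamma> and F, G coprime of maximal degree s.
  If s = 2k, then c = m (1 + X^2)^k generates (u, v): it equals a u + b v with
  a = F (1 + X^2)^k / (F^2 + G^2) and b = G (1 + X^2)^k / (F^2 + G^2), both in D since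
  F^2 + G^2 has no real root and degree 2s, while u / c = F / (1 + X^2)^k and
  v / c = G / (1 + X^2)^k lie in D.
  Conversely, if (u, v) = (c), then u = x c, v = y c and a x + b y = 1 with a, b, x, y in D.
  Writing x = X/E, y = Y/E, a = A/E', b = B/E' as proper fractions, coprimality of F and G
  gives X = F T, Y = G T, and E' E = (A F + B G) T; so T has no real root and
  deg E = s + deg T. As polynomials without real roots have even degree, s is even.
\<close>

section \<open>Constants in the Dress ring\<close>

lemma to_fract_power [simp]: "to_fract (p ^ n) = to_fract p ^ n"
  by (induction n) simp_all

lemma to_fract_of_int [simp]: "to_fract (of_int n) = of_int n"
  by (induction n rule: int_induct[of _ 0]) simp_all

lemma to_fract_const_mult: "to_fract [:x * y:] = to_fract [:x:] * to_fract [:y::real:]"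
  by (simp flip: to_fract_mult)

lemma to_fract_const_add: "to_fract [:x + y:] = to_fract [:x:] + to_fract [:y::real:]"
  by (simp flip: to_fract_add)

lemma to_fract_const_inverse: "to_fract [:inverse x:] = inverse (to_fract [:x::real:])"
proof (cases "x = 0")
  case False
  then have "to_fract [:x:] * to_fract [:inverse x:] = 1"
    by (simp add: pCons_one flip: to_fract_const_mult)
  then show ?thesis by (rule inverse_unique[symmetric])
qed simp

lemma dress_ring_0 [simp]: "0 \<in> dress_ring"
  using dress_ring.int[of 0] by simp

lemma dress_ring_1 [simp]: "1 \<in> dress_ring"
  using dress_ring.int[of 1] by simp

lemma dress_ring_diff: "a \<in> dress_ring \<Longrightarrow> b \<in> dress_ring \<Longrightarrow> a - b \<in> dress_ring"
  by (metis dress_ring.add dress_ring.neg diff_conv_add_uminus)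

lemma dress_ring_const: "to_fract [:r:] \<in> dress_ring"
proof -
  define n where "n = \<lceil>r\<rceil> - 1"
  define s where "s = sqrt (1 / (r - n) - 1)"
  have "0 < r - n" "r - n \<le> 1"
    unfolding n_def by linarith+
  then have "r - n = inverse (1 + s\<^sup>2)"
    unfolding s_def by (simp add: field_simps)
  then have "[:r:] = of_int n + [:inverse (1 + s * s):]"
    by (simp add: of_int_poly power2_eq_square)
  then have "to_fract [:r:] = of_int n + 1 / (1 + (to_fract [:s:])\<^sup>2)"
    by (simp add: to_fract_const_inverse to_fract_const_mult to_fract_const_add pCons_one
        power2_eq_square divide_inverse)
  then show ?thesis
    by (metis dress_ring.add dress_ring.int dress_ring.gen)
qed

section \<open>Polynomials without real roots\<close>

lemma Gamma_nonzero: "E \<in> Gamma \<Longrightarrow> E \<noteq> 0"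
  unfolding Gamma_def by auto

lemma Gamma_mult: "E \<in> Gamma \<Longrightarrow> E' \<in> Gamma \<Longrightarrow> E * E' \<in> Gamma"
  unfolding Gamma_def by auto

lemma Gamma_one: "1 \<in> Gamma"
  unfolding Gamma_def by simp

lemma Gamma_power: "E \<in> Gamma \<Longrightarrow> E ^ n \<in> Gamma"
  by (induction n) (simp_all add: Gamma_one Gamma_mult)

lemma Gamma_dvd: "S dvd E \<Longrightarrow> E \<in> Gamma \<Longrightarrow> S \<in> Gamma"
  unfolding Gamma_def by auto

lemma Gamma_sum_squares:
  fixes p q :: "real poly"
  assumes "coprime p q"
  shows "p\<^sup>2 + q\<^sup>2 \<in> Gamma"
  unfolding Gamma_def
proof safe
  fix x assume "poly (p\<^sup>2 + q\<^sup>2) x = 0"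
  then have "[:-x, 1:] dvd p" "[:-x, 1:] dvd q"
    by (simp_all add: sum_power2_eq_zero_iff poly_eq_0_iff_dvd)
  then have "is_unit [:-x, 1:]"
    using assms coprime_common_divisor by blast
  then show False
    by (simp add: is_unit_iff_degree)
qed

lemma coeff_square_double:
  fixes p :: "'a::idom poly"
  assumes "degree p \<le> m"
  shows "coeff (p\<^sup>2) (2 * m) = (coeff p m)\<^sup>2"
proof (cases "degree p = m")
  case True
  then show ?thesis
    using coeff_mult_degree_sum[of p p] by (simp add: power2_eq_square mult_2)
next
  case False
  have "degree (p\<^sup>2) < 2 * m"
    using degree_power_le[of p 2] assms False by simp
  then show ?thesis
    using assms False by (simp add: coeff_eq_0)
qed

lemma degree_sum_squares:
  fixes p q :: "real poly"
  shows "degree (p\<^sup>2 + q\<^sup>2) = 2 * max (degree p) (degree q)"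
proof (cases "p = 0 \<and> q = 0")
  case False
  define m where "m = max (degree p) (degree q)"
  have "p \<noteq> 0 \<and> m = degree p \<or> q \<noteq> 0 \<and> m = degree q"
    using False unfolding m_def by (auto simp: max_def)
  then have "coeff p m \<noteq> 0 \<or> coeff q m \<noteq> 0"
    by auto
  then have "coeff (p\<^sup>2 + q\<^sup>2) (2 * m) \<noteq> 0"
    by (simp add: coeff_square_double m_def sum_power2_eq_zero_iff)
  then have "2 * m \<le> degree (p\<^sup>2 + q\<^sup>2)"
    by (rule le_degree)
  moreover have "degree (p\<^sup>2 + q\<^sup>2) \<le> 2 * m"
  proof (rule degree_add_le)
    show "degree (p\<^sup>2) \<le> 2 * m" "degree (q\<^sup>2) \<le> 2 * m"
      using degree_power_le[of p 2] degree_power_le[of q 2] by (simp_all add: m_def max_def)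
  qed
  ultimately show ?thesis
    unfolding m_def by simp
qed auto

lemma poly_map_poly_of_real: "poly (map_poly of_real p) (of_real x) = of_real (poly p x)"
  by (induction p) (simp_all add: map_poly_pCons)

lemma map_poly_of_real_add: "map_poly of_real (p + q) = map_poly of_real p + map_poly of_real q"
  by (rule poly_eqI) (simp add: coeff_map_poly)

lemma map_poly_of_real_mult: "map_poly of_real (p * q) = map_poly of_real p * map_poly of_real q"
  by (rule poly_eqI) (simp add: coeff_map_poly coeff_mult)

lemma degree_shifted_square_plus_const: "degree ([:-a, 1:]\<^sup>2 + [:b:]\<^sup>2 :: real poly) = 2"
  by (simp add: power2_eq_square)

lemma shifted_square_plus_const_nonzero: "[:-a, 1:]\<^sup>2 + [:b:]\<^sup>2 \<noteq> (0 :: real poly)"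
  using degree_shifted_square_plus_const[of a b] by auto

lemma Gamma_quadratic_factor:
  assumes "E \<in> Gamma" "degree E > 0"
  obtains a b S where "b \<noteq> 0" "E = ([:-a, 1:]\<^sup>2 + [:b:]\<^sup>2) * S"
proof -
  let ?cp = "map_poly complex_of_real"
  have "\<not> constant (poly (?cp E))"
    using assms(2) by (simp add: constant_degree degree_map_poly)
  then obtain z where z: "poly (?cp E) z = 0"
    using fundamental_theorem_of_algebra by blast
  define a b where "a = Re z" and "b = Im z"
  have "b \<noteq> 0"
  proof
    assume "b = 0"
    then have "z = of_real a"
      unfolding a_def b_def by (simp add: complex_eq_iff)
    then show False
      using z assms(1) unfolding Gamma_def by (simp add: poly_map_poly_of_real)
  qed
  define q where "q = [:-a, 1:]\<^sup>2 + [:b:]\<^sup>2"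
  have "q \<noteq> 0" "degree q = 2"
    unfolding q_def by (simp_all add: shifted_square_plus_const_nonzero degree_shifted_square_plus_const)
  have q_z: "poly (?cp q) z = 0"
    unfolding q_def by (simp add: map_poly_pCons complex_eq_iff a_def b_def power2_eq_square algebra_simps)
  define R where "R = E mod q"
  have E: "E = q * (E div q) + R"
    unfolding R_def by simp
  have "degree R \<le> 1"
    using degree_mod_less[OF \<open>q \<noteq> 0\<close>, of E] \<open>degree q = 2\<close> unfolding R_def by auto
  then have R: "R = [:coeff R 0, coeff R 1:]"
    by (intro poly_eqI) (auto simp: coeff_pCons split: nat.split intro!: coeff_eq_0)
  have "poly (?cp R) z = 0"
    using z q_z E by (metis map_poly_of_real_add map_poly_of_real_mult poly_add poly_mult mult_zero_left add_0)
  then have "coeff R 0 + coeff R 1 * a = 0 \<and> coeff R 1 * b = 0"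
    by (subst (asm) R) (simp add: map_poly_pCons complex_eq_iff a_def b_def mult.commute)
  then have "R = 0"
    using R \<open>b \<noteq> 0\<close> by auto
  then have "E = q * (E div q)"
    using E by simp
  then show ?thesis
    unfolding q_def by (rule that[OF \<open>b \<noteq> 0\<close>])
qed

lemma Gamma_even_degree: "E \<in> Gamma \<Longrightarrow> even (degree E)"
proof (induction "degree E" arbitrary: E rule: less_induct)
  case less
  show ?case
  proof (cases "degree E = 0")
    case False
    then have "degree E > 0" by simp
    with less.prems obtain a b S where "b \<noteq> 0" and E: "E = ([:-a, 1:]\<^sup>2 + [:b:]\<^sup>2) * S"
      by (rule Gamma_quadratic_factor)
    have "S \<in> Gamma"
      using less.prems unfolding E by (rule Gamma_dvd[rotated]) simp
    have "degree E = 2 + degree S"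
      unfolding E using Gamma_nonzero[OF \<open>S \<in> Gamma\<close>]
      by (subst degree_mult_eq) (simp_all add: degree_shifted_square_plus_const shifted_square_plus_const_nonzero)
    then show ?thesis
      using less.hyps[of S] \<open>S \<in> Gamma\<close> by simp
  qed simp
qed

section \<open>The Dress ring as the ring of proper fractions over Gamma\<close>

lemma to_fract_smult: "to_fract (smult c p) = to_fract [:c:] * to_fract p"
  by (simp flip: to_fract_mult)

lemma poly_degree_le_2_eq: "degree (U :: 'a::zero poly) \<le> 2 \<Longrightarrow> U = [:coeff U 0, coeff U 1, coeff U 2:]"
  by (intro poly_eqI) (auto simp: coeff_pCons numeral_2_eq_2 split: nat.split intro!: coeff_eq_0)

lemma dress_ring_div_shifted_square_plus_const:
  assumes "b \<noteq> 0" and "degree U \<le> 2"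
  shows "to_fract U / to_fract ([:-a, 1:]\<^sup>2 + [:b:]\<^sup>2) \<in> dress_ring"
proof -
  define T where "T = [:-a, 1::real:]"
  define q where "q = T\<^sup>2 + [:b:]\<^sup>2"
  define t \<beta> where "t = to_fract T" and "\<beta> = to_fract [:b:]"
  have q: "to_fract q = t\<^sup>2 + \<beta>\<^sup>2"
    unfolding q_def t_def \<beta>_def by simp
  have "to_fract q \<noteq> 0" "\<beta> \<noteq> 0" "\<beta> + t \<noteq> 0"
    using assms(1) shifted_square_plus_const_nonzero[of a b]
    by (simp_all add: q_def T_def t_def \<beta>_def flip: to_fract_add)
  have inverse_\<beta>: "inverse \<beta> \<in> dress_ring"
    using dress_ring_const[of "inverse b"] by (simp add: \<beta>_def to_fract_const_inverse)
  have inverse_q: "1 / to_fract q \<in> dress_ring"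
  proof -
    have "1 + (t / \<beta>)\<^sup>2 = to_fract q / \<beta>\<^sup>2"
      using \<open>\<beta> \<noteq> 0\<close> unfolding q by (simp add: field_simps)
    then have "1 / to_fract q = inverse \<beta> * inverse \<beta> * (1 / (1 + (t / \<beta>)\<^sup>2))"
      using \<open>\<beta> \<noteq> 0\<close> \<open>to_fract q \<noteq> 0\<close> by (simp add: field_simps power2_eq_square)
    then show ?thesis
      using inverse_\<beta> dress_ring.gen by (metis dress_ring.mult)
  qed
  \<comment> \<open>The generator for h = (\<beta> - t) / (\<beta> + t) is (\<beta> + t)^2 / (2 q) = 1/2 + \<beta> t / q.\<close>
  have t_q: "t / to_fract q \<in> dress_ring"
  proof -
    have "(2 :: ratfun) \<noteq> 0"
      using to_fract_eq_0_iff[of "2 :: real poly"] by simp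
    have "1 + ((\<beta> - t) / (\<beta> + t))\<^sup>2 = ((\<beta> + t)\<^sup>2 + (\<beta> - t)\<^sup>2) / (\<beta> + t)\<^sup>2"
      using \<open>\<beta> + t \<noteq> 0\<close> by (simp add: power_divide add_divide_eq_iff)
    also have "\<dots> = 2 * to_fract q / (\<beta> + t)\<^sup>2"
      unfolding q by (simp add: power2_eq_square algebra_simps)
    finally have "1 + ((\<beta> - t) / (\<beta> + t))\<^sup>2 = 2 * to_fract q / (\<beta> + t)\<^sup>2" .
    moreover have "(\<beta> + t)\<^sup>2 = to_fract q + 2 * (\<beta> * t)"
      unfolding q by (simp add: power2_eq_square algebra_simps)
    ultimately have "1 / (1 + ((\<beta> - t) / (\<beta> + t))\<^sup>2) - 1 / (1 + 1\<^sup>2) = \<beta> * t / to_fract q"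
      using \<open>(2 :: ratfun) \<noteq> 0\<close> \<open>to_fract q \<noteq> 0\<close> by (simp add: field_simps)
    then have "t / to_fract q = (1 / (1 + ((\<beta> - t) / (\<beta> + t))\<^sup>2) - 1 / (1 + 1\<^sup>2)) * inverse \<beta>"
      using \<open>\<beta> \<noteq> 0\<close> by (simp add: field_simps)
    then show ?thesis
      by (metis dress_ring.gen dress_ring_diff dress_ring.mult inverse_\<beta>)
  qed
  \<comment> \<open>Expand U in powers of T = X - a and replace T^2 by q - b^2.\<close>
  define u2 c1 c0 where "u2 = coeff U 2" and "c1 = coeff U 1 + 2 * a * u2"
    and "c0 = coeff U 0 - (a\<^sup>2 + b\<^sup>2) * u2 + a * c1"
  have "U = smult u2 q + smult c1 T + [:c0:]"
    by (subst poly_degree_le_2_eq[OF assms(2)])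
      (simp add: q_def T_def u2_def c0_def c1_def power2_eq_square algebra_simps)
  then have "to_fract U = to_fract [:u2:] * to_fract q + to_fract [:c1:] * t + to_fract [:c0:]"
    by (simp add: to_fract_smult t_def)
  then have "to_fract U / to_fract q
      = to_fract [:u2:] + to_fract [:c1:] * (t / to_fract q) + to_fract [:c0:] * (1 / to_fract q)"
    using \<open>to_fract q \<noteq> 0\<close> by (simp add: field_simps)
  then have "to_fract U / to_fract q \<in> dress_ring"
    by (metis dress_ring.add dress_ring.mult dress_ring_const t_q inverse_q)
  then show ?thesis
    unfolding q_def T_def .
qed

lemma proper_Gamma_fraction_in_dress_ring:
  assumes "E \<in> Gamma" and "degree P \<le> degree E"
  shows "to_fract P / to_fract E \<in> dress_ring"
  using assms
proof (induction "degree E" arbitrary: E P rule: less_induct)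
  case less
  show ?case
  proof (cases "degree E = 0")
    case True
    then obtain e p where E: "E = [:e:]" and P: "P = [:p:]"
      using less.prems(2) by (metis degree_eq_zeroE le_zero_eq)
    then have "to_fract P / to_fract E = to_fract [:p:] * to_fract [:inverse e:]"
      by (simp add: to_fract_const_inverse divide_inverse)
    then show ?thesis
      by (metis dress_ring.mult dress_ring_const)
  next
    case False
    then have "degree E > 0" by simp
    with less.prems(1) obtain a b S where "b \<noteq> 0" and E: "E = ([:-a, 1:]\<^sup>2 + [:b:]\<^sup>2) * S"
      by (rule Gamma_quadratic_factor)
    define q where "q = [:-a, 1:]\<^sup>2 + [:b:]\<^sup>2"
    have "S \<in> Gamma"
      using less.prems(1) unfolding E by (rule Gamma_dvd[rotated]) simp
    then have "S \<noteq> 0"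
      by (rule Gamma_nonzero)
    have "q \<noteq> 0" and degree_E: "degree E = 2 + degree S"
      unfolding E q_def using \<open>S \<noteq> 0\<close>
      by (simp_all add: degree_mult_eq shifted_square_plus_const_nonzero degree_shifted_square_plus_const)
    define U V where "U = P div S" and "V = P mod S"
    have P: "P = S * U + V"
      unfolding U_def V_def by simp
    have "degree V \<le> degree S"
      using degree_mod_less[OF \<open>S \<noteq> 0\<close>, of P] unfolding V_def by auto
    have "degree U \<le> 2"
    proof (cases "U = 0")
      case False
      have "degree S + degree U = degree (P - V)"
        using P degree_mult_eq[OF \<open>S \<noteq> 0\<close> False] by simp
      also have "\<dots> \<le> 2 + degree S"
        using degree_diff_le_max[of P V] less.prems(2) degree_E \<open>degree V \<le> degree S\<close> by simp
      finally show ?thesis by simp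
    qed simp
    have "to_fract V / to_fract S \<in> dress_ring"
      using less.hyps[OF _ \<open>S \<in> Gamma\<close> \<open>degree V \<le> degree S\<close>] degree_E by simp
    moreover have "to_fract U / to_fract q \<in> dress_ring" "1 / to_fract q \<in> dress_ring"
      unfolding q_def using dress_ring_div_shifted_square_plus_const[OF \<open>b \<noteq> 0\<close>, of U a]
        dress_ring_div_shifted_square_plus_const[OF \<open>b \<noteq> 0\<close>, of 1 a] \<open>degree U \<le> 2\<close> by simp_all
    moreover have "to_fract P / to_fract E
        = to_fract U / to_fract q + (to_fract V / to_fract S) * (1 / to_fract q)"
      unfolding P E q_def[symmetric] using \<open>S \<noteq> 0\<close> \<open>q \<noteq> 0\<close> by (simp add: field_simps)
    ultimately show ?thesis
      by (metis dress_ring.add dress_ring.mult)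
  qed
qed

definition proper_Gamma_fractions :: "ratfun set" where
  "proper_Gamma_fractions = {to_fract P / to_fract E | P E. E \<in> Gamma \<and> degree P \<le> degree E}"

lemma proper_Gamma_fractionsI:
  "E \<in> Gamma \<Longrightarrow> degree P \<le> degree E \<Longrightarrow> to_fract P / to_fract E \<in> proper_Gamma_fractions"
  unfolding proper_Gamma_fractions_def by blast

lemma proper_Gamma_fractions_common_denominator:
  assumes "x \<in> proper_Gamma_fractions" and "y \<in> proper_Gamma_fractions"
  obtains X Y E where "E \<in> Gamma" "degree X \<le> degree E" "degree Y \<le> degree E"
    and "x = to_fract X / to_fract E" "y = to_fract Y / to_fract E"
proof -
  obtain P E P' E' where "E \<in> Gamma" "degree P \<le> degree E" "x = to_fract P / to_fract E"
    and "E' \<in> Gamma" "degree P' \<le> degree E'" "y = to_fract P' / to_fract E'"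
    using assms unfolding proper_Gamma_fractions_def by blast
  moreover from this have "E \<noteq> 0" "E' \<noteq> 0"
    by (simp_all add: Gamma_nonzero)
  ultimately show ?thesis
    using that[of "E * E'" "P * E'" "P' * E"] Gamma_mult[of E E']
      degree_mult_le[of P E'] degree_mult_le[of P' E] degree_mult_eq[of E E']
    by simp
qed

lemma dress_ring_subset_proper_Gamma_fractions: "dress_ring \<subseteq> proper_Gamma_fractions"
proof
  fix z assume "z \<in> dress_ring"
  then show "z \<in> proper_Gamma_fractions"
  proof (induction rule: dress_ring.induct)
    case (int n)
    have "degree (of_int n :: real poly) = 0"
      by (simp add: of_int_poly)
    then show ?case
      using proper_Gamma_fractionsI[OF Gamma_one, of "of_int n"] by simp
  next
    case (gen h)
    obtain p q where h: "h = to_fract p / to_fract q" and "q \<noteq> 0" "coprime q p"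
      using coprime_quot_of_fract[of h] Fract_quot_of_fract[of h]
      by (metis Fract_conv_to_fract coprime_commute snd_quot_of_fract_nonzero)
    then have "1 / (1 + h\<^sup>2) = to_fract (q\<^sup>2) / to_fract (q\<^sup>2 + p\<^sup>2)"
      unfolding h by (simp add: field_simps)
    moreover have "degree (q\<^sup>2) \<le> degree (q\<^sup>2 + p\<^sup>2)"
      using degree_power_le[of q 2] by (simp add: degree_sum_squares)
    ultimately show ?case
      by (metis proper_Gamma_fractionsI Gamma_sum_squares[OF \<open>coprime q p\<close>])
  next
    case (add a b)
    from add.IH obtain X Y E where "E \<in> Gamma" "degree X \<le> degree E" "degree Y \<le> degree E"
      and "a = to_fract X / to_fract E" "b = to_fract Y / to_fract E"
      by (rule proper_Gamma_fractions_common_denominator)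
    then show ?case
      using proper_Gamma_fractionsI[of E "X + Y"] by (simp add: add_divide_distrib degree_add_le)
  next
    case (neg a)
    then obtain P E where "E \<in> Gamma" "degree P \<le> degree E" "a = to_fract P / to_fract E"
      unfolding proper_Gamma_fractions_def by blast
    then show ?case
      using proper_Gamma_fractionsI[of E "- P"] by simp
  next
    case (mult a b)
    then obtain P E P' E' where "E \<in> Gamma" "degree P \<le> degree E" "a = to_fract P / to_fract E"
      and "E' \<in> Gamma" "degree P' \<le> degree E'" "b = to_fract P' / to_fract E'"
      unfolding proper_Gamma_fractions_def by blast
    moreover from this have "degree (P * P') \<le> degree (E * E')"
      using degree_mult_le[of P P'] by (simp add: degree_mult_eq Gamma_nonzero)
    ultimately show ?case
      using proper_Gamma_fractionsI[OF Gamma_mult, of E E' "P * P'"] by simp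
  qed
qed

lemma dress_ring_eq_proper_Gamma_fractions: "dress_ring = proper_Gamma_fractions"
  using dress_ring_subset_proper_Gamma_fractions proper_Gamma_fraction_in_dress_ring
  unfolding proper_Gamma_fractions_def by blast

section \<open>Principal ideals with two generators\<close>

lemma coprime_cross_mult_eqE:
  fixes F G X Y :: "'a::semiring_gcd"
  assumes "coprime F G" and "F * Y = X * G"
  obtains T where "X = F * T" "Y = G * T"
proof (cases "F = 0")
  case True
  then have "is_unit G"
    using assms(1) by simp
  then have "X = 0"
    using assms(2) True by auto
  moreover have "Y = G * (Y div G)"
    using \<open>is_unit G\<close> by (metis dvd_mult_div_cancel unit_imp_dvd)
  ultimately show ?thesis
    using that[of "Y div G"] True by simp
next
  case False
  have "F dvd X"
    using assms coprime_dvd_mult_left_iff by (metis dvd_triv_left)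
  then obtain T where "X = F * T" ..
  moreover from this have "Y = G * T"
    using assms(2) False by (simp add: ac_simps)
  ultimately show ?thesis
    using that by blast
qed

lemma degree_eq_max_degree_add_degree:
  fixes A B E E' F G T :: "'a::idom poly"
  assumes "E' * E = (A * F + B * G) * T" and "E \<noteq> 0" "E' \<noteq> 0" and "F \<noteq> 0 \<or> G \<noteq> 0"
    and "degree (F * T) \<le> degree E" "degree (G * T) \<le> degree E"
    and "degree A \<le> degree E'" "degree B \<le> degree E'"
  shows "degree E = max (degree F) (degree G) + degree T"
proof -
  have "T \<noteq> 0" "A * F + B * G \<noteq> 0"
    using assms(1-3) by auto
  have "degree E' + degree E = degree (A * F + B * G) + degree T"
    using assms(1-3) \<open>T \<noteq> 0\<close> \<open>A * F + B * G \<noteq> 0\<close> by (metis degree_mult_eq)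
  moreover have "degree (A * F + B * G) \<le> degree E' + max (degree F) (degree G)"
    using degree_mult_le[of A F] degree_mult_le[of B G] assms(7,8)
    by (intro degree_add_le) simp_all
  moreover have "max (degree F) (degree G) + degree T \<le> degree E"
  proof -
    have F: "degree F + degree T \<le> degree E" if "F \<noteq> 0"
      using that assms(5) \<open>T \<noteq> 0\<close> by (simp add: degree_mult_eq)
    have G: "degree G + degree T \<le> degree E" if "G \<noteq> 0"
      using that assms(6) \<open>T \<noteq> 0\<close> by (simp add: degree_mult_eq)
    show ?thesis
      using F G assms(4) by (cases "F = 0"; cases "G = 0") auto
  qed
  ultimately show ?thesis
    by simp
qed

lemma even_max_degree_if_unimodular:
  fixes F G :: "real poly"
  assumes "coprime F G"
    and "a \<in> dress_ring" "b \<in> dress_ring" "x \<in> dress_ring" "y \<in> dress_ring"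
    and "a * x + b * y = 1" and "to_fract F * y = x * to_fract G"
  shows "even (max (degree F) (degree G))"
proof -
  obtain X Y E where "E \<in> Gamma" "degree X \<le> degree E" "degree Y \<le> degree E"
    and x: "x = to_fract X / to_fract E" and y: "y = to_fract Y / to_fract E"
    using assms(4,5) unfolding dress_ring_eq_proper_Gamma_fractions
    by (rule proper_Gamma_fractions_common_denominator)
  obtain A B E' where "E' \<in> Gamma" "degree A \<le> degree E'" "degree B \<le> degree E'"
    and a: "a = to_fract A / to_fract E'" and b: "b = to_fract B / to_fract E'"
    using assms(2,3) unfolding dress_ring_eq_proper_Gamma_fractions
    by (rule proper_Gamma_fractions_common_denominator)
  have "E \<noteq> 0" "E' \<noteq> 0"
    using \<open>E \<in> Gamma\<close> \<open>E' \<in> Gamma\<close> by (simp_all add: Gamma_nonzero)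
  have "to_fract (F * Y) = to_fract (X * G)"
    using assms(7) \<open>E \<noteq> 0\<close> unfolding x y by (simp add: field_simps)
  then have "F * Y = X * G"
    by (simp only: to_fract_eq_iff)
  with assms(1) obtain T where X: "X = F * T" and Y: "Y = G * T"
    by (rule coprime_cross_mult_eqE)
  have "to_fract (A * X + B * Y) = to_fract (E' * E)"
    using assms(6) \<open>E \<noteq> 0\<close> \<open>E' \<noteq> 0\<close> unfolding x y a b by (simp add: field_simps)
  then have E'E: "E' * E = (A * F + B * G) * T"
    unfolding X Y by (simp only: to_fract_eq_iff) (simp add: algebra_simps)
  then have "T \<in> Gamma"
    using Gamma_mult[OF \<open>E' \<in> Gamma\<close> \<open>E \<in> Gamma\<close>] by (metis Gamma_dvd dvd_triv_right)
  have "F \<noteq> 0 \<or> G \<noteq> 0"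
    using assms(1) by auto
  then have "degree E = max (degree F) (degree G) + degree T"
    using E'E \<open>E \<noteq> 0\<close> \<open>E' \<noteq> 0\<close> \<open>degree X \<le> degree E\<close> \<open>degree Y \<le> degree E\<close>
      \<open>degree A \<le> degree E'\<close> \<open>degree B \<le> degree E'\<close>
    unfolding X Y by (intro degree_eq_max_degree_add_degree)
  then show ?thesis
    using Gamma_even_degree[OF \<open>E \<in> Gamma\<close>] Gamma_even_degree[OF \<open>T \<in> Gamma\<close>] by simp
qed

lemma dress_principal_ideal2I:
  assumes "u \<in> dress_ring" "v \<in> dress_ring"
    and "a \<in> dress_ring" "b \<in> dress_ring" "x \<in> dress_ring" "y \<in> dress_ring"
    and "c = a * u + b * v" "u = x * c" "v = y * c"
  shows "dress_principal (dress_ideal2 u v)"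
  unfolding dress_principal_def
proof (intro bexI set_eqI iffI)
  show "c \<in> dress_ring"
    using assms(1-4,7) by (simp add: dress_ring.add dress_ring.mult)
  fix z
  assume "z \<in> dress_ideal2 u v"
  then obtain a' b' where "a' \<in> dress_ring" "b' \<in> dress_ring" "z = (a' * x + b' * y) * c"
    unfolding dress_ideal2_def assms(8,9) by (auto simp: algebra_simps)
  then show "z \<in> {a * c |a. a \<in> dress_ring}"
    using assms(5,6) by (blast intro: dress_ring.add dress_ring.mult)
next
  fix z
  assume "z \<in> {a * c |a. a \<in> dress_ring}"
  then obtain d where "d \<in> dress_ring" "z = (d * a) * u + (d * b) * v"
    unfolding assms(7) by (auto simp: algebra_simps)
  then show "z \<in> dress_ideal2 u v"
    unfolding dress_ideal2_def using assms(3,4) by (blast intro: dress_ring.mult)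
qed

lemma dress_principal_ideal2E:
  assumes "dress_principal (dress_ideal2 u v)"
  obtains c a b x y where "a \<in> dress_ring" "b \<in> dress_ring" "x \<in> dress_ring" "y \<in> dress_ring"
    and "c = a * u + b * v" "u = x * c" "v = y * c"
proof -
  obtain c where I: "dress_ideal2 u v = {a * c |a. a \<in> dress_ring}"
    using assms unfolding dress_principal_def by blast
  have "u = 1 * u + 0 * v" "v = 0 * u + 1 * v"
    by simp_all
  then have "u \<in> dress_ideal2 u v" "v \<in> dress_ideal2 u v"
    unfolding dress_ideal2_def using dress_ring_0 dress_ring_1 by blast+
  then obtain x y where "x \<in> dress_ring" "u = x * c" "y \<in> dress_ring" "v = y * c"
    unfolding I by blast
  moreover have "c \<in> dress_ideal2 u v"
    unfolding I using dress_ring_1 by (metis (mono_tags, lifting) CollectI mult_1)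
  then obtain a b where "a \<in> dress_ring" "b \<in> dress_ring" "c = a * u + b * v"
    unfolding dress_ideal2_def by blast
  ultimately show ?thesis
    using that by blast
qed

lemma dress_principal_if_even_max_degree:
  fixes F G :: "real poly" and m :: ratfun
  assumes "coprime F G"
    and "m * to_fract F \<in> dress_ring" "m * to_fract G \<in> dress_ring"
    and "even (max (degree F) (degree G))"
  shows "dress_principal (dress_ideal2 (m * to_fract F) (m * to_fract G))"
proof -
  define s where "s = max (degree F) (degree G)"
  obtain k where "s = 2 * k"
    using assms(4) unfolding s_def by blast
  define \<rho> where "\<rho> = (1\<^sup>2 + [:0, 1 :: real:]\<^sup>2) ^ k"
  have "1\<^sup>2 + [:0, 1 :: real:]\<^sup>2 \<in> Gamma"
    by (rule Gamma_sum_squares) simp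
  then have "\<rho> \<in> Gamma"
    unfolding \<rho>_def by (rule Gamma_power)
  have "degree \<rho> = s"
    using \<open>1\<^sup>2 + [:0, 1:]\<^sup>2 \<in> Gamma\<close> unfolding \<rho>_def \<open>s = 2 * k\<close>
    by (simp add: degree_power_eq Gamma_nonzero degree_sum_squares del: power_one)
  define Q where "Q = F\<^sup>2 + G\<^sup>2"
  have "Q \<in> Gamma" "degree Q = 2 * s"
    unfolding Q_def s_def using assms(1) by (simp_all add: Gamma_sum_squares degree_sum_squares)
  have "to_fract Q \<noteq> 0" "to_fract \<rho> \<noteq> 0"
    using \<open>Q \<in> Gamma\<close> \<open>\<rho> \<in> Gamma\<close> by (simp_all add: Gamma_nonzero)
  have "degree F \<le> degree \<rho>" "degree G \<le> degree \<rho>"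
    unfolding \<open>degree \<rho> = s\<close> s_def by simp_all
  moreover from this have "degree (F * \<rho>) \<le> degree Q" "degree (G * \<rho>) \<le> degree Q"
    using degree_mult_le[of F \<rho>] degree_mult_le[of G \<rho>] \<open>degree \<rho> = s\<close> \<open>degree Q = 2 * s\<close>
    by linarith+
  ultimately have "to_fract (F * \<rho>) / to_fract Q \<in> dress_ring" "to_fract (G * \<rho>) / to_fract Q \<in> dress_ring"
    and "to_fract F / to_fract \<rho> \<in> dress_ring" "to_fract G / to_fract \<rho> \<in> dress_ring"
    using \<open>Q \<in> Gamma\<close> \<open>\<rho> \<in> Gamma\<close> by (blast intro: proper_Gamma_fraction_in_dress_ring)+
  moreover have "to_fract (F * \<rho>) / to_fract Q * (m * to_fract F) + to_fract (G * \<rho>) / to_fract Q * (m * to_fract G)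
      = m * to_fract \<rho> * to_fract (F\<^sup>2 + G\<^sup>2) / to_fract Q"
    using \<open>to_fract Q \<noteq> 0\<close> by (simp add: field_simps power2_eq_square)
  then have "m * to_fract \<rho>
      = to_fract (F * \<rho>) / to_fract Q * (m * to_fract F) + to_fract (G * \<rho>) / to_fract Q * (m * to_fract G)"
    using \<open>to_fract Q \<noteq> 0\<close> by (simp add: Q_def[symmetric])
  moreover have "m * to_fract F = to_fract F / to_fract \<rho> * (m * to_fract \<rho>)"
    and "m * to_fract G = to_fract G / to_fract \<rho> * (m * to_fract \<rho>)"
    using \<open>to_fract \<rho> \<noteq> 0\<close> by simp_all
  ultimately show ?thesis
    by (rule dress_principal_ideal2I[OF assms(2,3)])
qed

lemma even_max_degree_if_dress_principal:
  fixes F G :: "real poly" and m :: ratfun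
  assumes "coprime F G" and "m \<noteq> 0"
    and "dress_principal (dress_ideal2 (m * to_fract F) (m * to_fract G))"
  shows "even (max (degree F) (degree G))"
proof -
  obtain c a b x y where "a \<in> dress_ring" "b \<in> dress_ring" "x \<in> dress_ring" "y \<in> dress_ring"
    and c: "c = a * (m * to_fract F) + b * (m * to_fract G)"
    and u: "m * to_fract F = x * c" and v: "m * to_fract G = y * c"
    using assms(3) by (rule dress_principal_ideal2E)
  have "c \<noteq> 0"
    using u v assms(1,2) by auto
  have "(a * x + b * y) * c = 1 * c"
    using c u v by (simp add: algebra_simps)
  then have "a * x + b * y = 1"
    using \<open>c \<noteq> 0\<close> by (rule mult_right_cancel[THEN iffD1, rotated])
  moreover have "(m * to_fract F) * y = x * (m * to_fract G)"
    unfolding u v by (simp add: ac_simps)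
  then have "to_fract F * y = x * to_fract G"
    using assms(2) by (simp add: ac_simps)
  ultimately show ?thesis
    using assms(1) \<open>a \<in> dress_ring\<close> \<open>b \<in> dress_ring\<close> \<open>x \<in> dress_ring\<close> \<open>y \<in> dress_ring\<close>
    by (intro even_max_degree_if_unimodular)
qed

theorem proposition2p4:
  fixes f g \<gamma> :: "real poly"
  assumes "f \<noteq> 0 \<or> g \<noteq> 0"
    and "\<gamma> \<in> Gamma"
    and "to_fract f / to_fract \<gamma> \<in> dress_ring"
    and "to_fract g / to_fract \<gamma> \<in> dress_ring"
  shows "\<not> dress_principal (dress_ideal2 (to_fract f / to_fract \<gamma>) (to_fract g / to_fract \<gamma>))
         \<longleftrightarrow> odd (max (degree (f div gcd f g)) (degree (g div gcd f g)))"
proof -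
  define m where "m = to_fract (gcd f g) / to_fract \<gamma>"
  have "m \<noteq> 0"
    using assms(1,2) unfolding m_def by (simp add: Gamma_nonzero)
  have "coprime (f div gcd f g) (g div gcd f g)"
    using assms(1) by (rule div_gcd_coprime)
  moreover have "to_fract f / to_fract \<gamma> = m * to_fract (f div gcd f g)"
    "to_fract g / to_fract \<gamma> = m * to_fract (g div gcd f g)"
    unfolding m_def by (simp_all flip: to_fract_mult)
  ultimately show ?thesis
    using assms(3,4) \<open>m \<noteq> 0\<close>
      dress_principal_if_even_max_degree even_max_degree_if_dress_principal
    by metis
qed

end
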